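(* Let $I$ be an index set of non-measurable cardinality and $H$ the group $\mathbb Z^{(I)}$ with the topology of pointwise convergence on $\mathbb Z^I$. Let $\bar t\in\mathbb T^I$ and suppose there is an infinite set $J\subseteq I$ such that $\bar t(i)$ is irrational for every $i\in J$ and the set $\{\bar t(i):i\in J\}$ is linearly independent over $\mathbb Q$. Then $\bar t\notin\widehat H$.
   Context: $\mathbb Z^{(I)}$ is the group of finitely supported functions $I\to\mathbb Z$, paired with $\mathbb Z^I$ by $\langle\bar g,\bar x\rangle=\sum_i\bar g(i)\bar x(i)$; $H$ carries the weakest topology making all maps $\bar g\mapsto\langle\bar g,\bar x\rangle\in\mathbb Z$ ($\mathbb Z$ discrete) continuous. $\mathbb T=\mathbb R/\mathbb Z$ is identified with $(-1/2,1/2]$ with addition mod $1$, so elements of $\mathbb T$ are regarded as real numbers. An element $\bar t\in\mathbb T^I$ is identified with the homomorphism $H\to\mathbb T$, $\bar g\mapsto\sum_i\bar g(i)\bar t(i)$, and $\widehat H$ (continuous homomorphisms $H\to\mathbb T$) is thereby a subgroup of $\mathbb T^I$. *)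

theory Defs
  imports "HOL-Analysis.Analysis"
begin

text \<open>Ulam-measurable cardinality: there is a countably complete non-principal
  ultrafilter on the set I (equivalently a non-trivial two-valued countably additive
  measure on all subsets of I vanishing on singletons).\<close>
definition measurable_cardinality :: "'i set \<Rightarrow> bool" where
  "measurable_cardinality I \<longleftrightarrow>
     (\<exists>U. U \<subseteq> Pow I \<and> I \<in> U \<and> {} \<notin> U
        \<and> (\<forall>A B. A \<in> U \<and> A \<subseteq> B \<and> B \<subseteq> I \<longrightarrow> B \<in> U)
        \<and> (\<forall>A. A \<subseteq> I \<longrightarrow> A \<in> U \<or> I - A \<in> U)
        \<and> (\<forall>C. countable C \<and> C \<noteq> {} \<and> C \<subseteq> U \<longrightarrow> \<Inter>C \<in> U)
        \<and> (\<forall>i\<in>I. {i} \<notin> U))"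

definition fin_supp :: "'i set \<Rightarrow> ('i \<Rightarrow> int) set" where
  "fin_supp I = {g. finite {i. g i \<noteq> 0} \<and> (\<forall>i. i \<notin> I \<longrightarrow> g i = 0)}"

definition pairing :: "('i \<Rightarrow> int) \<Rightarrow> ('i \<Rightarrow> int) \<Rightarrow> int" where
  "pairing g x = (\<Sum>i\<in>{i. g i \<noteq> 0}. g i * x i)"

text \<open>Weakest topology on H making all g |-> <g,x> (x in Z^I) continuous into discrete Z:
  generated by the preimages of singletons.\<close>
definition H_topology :: "'i set \<Rightarrow> ('i \<Rightarrow> int) topology" where
  "H_topology I = topology_generated_by
     {{g \<in> fin_supp I. pairing g x = n} | x n. \<forall>i. i \<notin> I \<longrightarrow> x i = 0}"

text \<open>T = R/Z represented by (-1/2,1/2]; reduction map R -> T.\<close>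
definition Tset :: "real set" where "Tset = {-1/2<..1/2}"

definition tred :: "real \<Rightarrow> real" where
  "tred r = r - real_of_int \<lceil>r - 1/2\<rceil>"

text \<open>Quotient topology on T: U \<subseteq> T open iff its preimage in R is open.
  (This family is already a topology; generating from it changes nothing.)\<close>
definition T_topology :: "real topology" where
  "T_topology = topology_generated_by {U. U \<subseteq> Tset \<and> open (tred -` U)}"

text \<open>An element t of T^I viewed as the homomorphism H -> T, g |-> sum g(i) t(i).\<close>
definition char_of :: "('i \<Rightarrow> real) \<Rightarrow> ('i \<Rightarrow> int) \<Rightarrow> real" where
  "char_of t g = tred (\<Sum>i\<in>{i. g i \<noteq> 0}. real_of_int (g i) * t i)"

definition dual_group :: "'i set \<Rightarrow> ('i \<Rightarrow> real) set" where
  "dual_group I = {t. (\<forall>i\<in>I. t i \<in> Tset) \<and> (\<forall>i. i \<notin> I \<longrightarrow> t i = 0)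
                      \<and> continuous_map (H_topology I) T_topology (char_of t)}"

end

theory Submission
  imports Defs
begin

(* A continuous character of H is small on a neighbourhood of 0, and every neighbourhood of 0
   contains the annihilator of finitely many x in Z^I.  Gaussian elimination over Z, starting
   from the unit vectors at |X| + 2 points of J, yields two elements of this annihilator whose
   t-values are linearly independent over Z, so one of these values r is not an integer; some
   integer multiple of r then lies at distance at least 1/4 from Z, contradicting smallness. *)

definition real_pairing :: "('i \<Rightarrow> int) \<Rightarrow> ('i \<Rightarrow> real) \<Rightarrow> real" where
  "real_pairing g t = (\<Sum>i\<in>{i. g i \<noteq> 0}. of_int (g i) * t i)"

definition annihilator :: "'i set \<Rightarrow> ('i \<Rightarrow> int) set \<Rightarrow> ('i \<Rightarrow> int) set" where
  "annihilator I X = {g \<in> fin_supp I. \<forall>x\<in>X. pairing g x = 0}"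

definition int_independent :: "('k \<Rightarrow> real) \<Rightarrow> 'k set \<Rightarrow> bool" where
  "int_independent v S \<longleftrightarrow>
     (\<forall>c::'k \<Rightarrow> int. (\<Sum>k\<in>S. of_int (c k) * v k) = 0 \<longrightarrow> (\<forall>k\<in>S. c k = 0))"

lemma char_of_eq_tred_real_pairing: "char_of t g = tred (real_pairing g t)"
  unfolding char_of_def real_pairing_def ..

lemma pairing_eq_sum:
  assumes "finite S" "{i. g i \<noteq> 0} \<subseteq> S"
  shows "pairing g x = (\<Sum>i\<in>S. g i * x i)"
  unfolding pairing_def by (rule sum.mono_neutral_left) (use assms in auto)

lemma real_pairing_eq_sum:
  assumes "finite S" "{i. g i \<noteq> 0} \<subseteq> S"
  shows "real_pairing g t = (\<Sum>i\<in>S. of_int (g i) * t i)"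
  unfolding real_pairing_def by (rule sum.mono_neutral_left) (use assms in auto)

lemma pairing_zero [simp]: "pairing (\<lambda>i. 0) x = 0"
  by (simp add: pairing_def)

lemma fin_supp_lincomb:
  assumes "g \<in> fin_supp I" "h \<in> fin_supp I"
  shows "(\<lambda>i. a * g i - b * h i) \<in> fin_supp I"
proof -
  have "{i. a * g i - b * h i \<noteq> 0} \<subseteq> {i. g i \<noteq> 0} \<union> {i. h i \<noteq> 0}" by auto
  then show ?thesis using assms by (auto simp: fin_supp_def intro: finite_subset)
qed

lemma pairing_lincomb:
  assumes "g \<in> fin_supp I" "h \<in> fin_supp I"
  shows "pairing (\<lambda>i. a * g i - b * h i) x = a * pairing g x - b * pairing h x"
proof -
  let ?S = "{i. g i \<noteq> 0} \<union> {i. h i \<noteq> 0}"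
  have S: "finite ?S" "{i. a * g i - b * h i \<noteq> 0} \<subseteq> ?S"
    using assms by (auto simp: fin_supp_def)
  have "pairing (\<lambda>i. a * g i - b * h i) x = (\<Sum>i\<in>?S. (a * g i - b * h i) * x i)"
    by (rule pairing_eq_sum[OF S])
  also have "\<dots> = a * (\<Sum>i\<in>?S. g i * x i) - b * (\<Sum>i\<in>?S. h i * x i)"
    by (simp add: sum_subtractf sum_distrib_left left_diff_distrib mult.assoc)
  also have "\<dots> = a * pairing g x - b * pairing h x"
    by (simp add: pairing_eq_sum[OF S(1)])
  finally show ?thesis .
qed

lemma real_pairing_lincomb:
  assumes "g \<in> fin_supp I" "h \<in> fin_supp I"
  shows "real_pairing (\<lambda>i. a * g i - b * h i) t = a * real_pairing g t - b * real_pairing h t"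
proof -
  let ?S = "{i. g i \<noteq> 0} \<union> {i. h i \<noteq> 0}"
  have S: "finite ?S" "{i. a * g i - b * h i \<noteq> 0} \<subseteq> ?S"
    using assms by (auto simp: fin_supp_def)
  have "real_pairing (\<lambda>i. a * g i - b * h i) t = (\<Sum>i\<in>?S. of_int (a * g i - b * h i) * t i)"
    by (rule real_pairing_eq_sum[OF S])
  also have "\<dots> = a * (\<Sum>i\<in>?S. of_int (g i) * t i) - b * (\<Sum>i\<in>?S. of_int (h i) * t i)"
    by (simp add: sum_subtractf sum_distrib_left left_diff_distrib mult.assoc)
  also have "\<dots> = a * real_pairing g t - b * real_pairing h t"
    by (simp add: real_pairing_eq_sum[OF S(1)])
  finally show ?thesis .
qed

lemma annihilator_lincomb:
  assumes "g \<in> annihilator I X" "h \<in> annihilator I X"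
  shows "(\<lambda>i. a * g i - b * h i) \<in> annihilator I X"
  using assms by (auto simp: annihilator_def fin_supp_lincomb pairing_lincomb)

lemma annihilator_empty [simp]: "annihilator I {} = fin_supp I"
  by (simp add: annihilator_def)

lemma annihilator_insert: "annihilator I (insert x X) = {g \<in> annihilator I X. pairing g x = 0}"
  by (auto simp: annihilator_def)

lemma tred_eq_self: "-1/2 < y \<Longrightarrow> y \<le> 1/2 \<Longrightarrow> tred y = y"
  unfolding tred_def by (simp add: ceiling_eq_iff)

lemma tred_zero [simp]: "tred 0 = 0"
  by (rule tred_eq_self) auto

lemma tred_add_of_int [simp]: "tred (y + of_int k) = tred y"
proof -
  have "\<lceil>y + of_int k - 1/2\<rceil> = \<lceil>(y - 1/2) + of_int k\<rceil>" by (simp add: algebra_simps)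
  then show ?thesis unfolding tred_def by simp
qed

lemma tred_decomp: "\<exists>z. y = tred y + of_int z"
  unfolding tred_def by auto

lemma tred_preimage_quarter: "tred -` {-1/4<..<1/4} = (\<Union>k::int. ball (of_int k) (1/4))"
proof (intro set_eqI iffI)
  fix y assume "y \<in> tred -` {-1/4<..<1/4}"
  then have "\<bar>tred y\<bar> < 1/4" by auto
  moreover obtain z where "y = tred y + of_int z" using tred_decomp by blast
  moreover from this have "of_int z - y = - tred y" by linarith
  ultimately have "y \<in> ball (of_int z) (1/4)" by (simp add: dist_real_def)
  then show "y \<in> (\<Union>k::int. ball (of_int k) (1/4))" by blast
next
  fix y :: real assume "y \<in> (\<Union>k::int. ball (of_int k) (1/4))"
  then obtain k :: int where "\<bar>of_int k - y\<bar> < 1/4" by (auto simp: dist_real_def)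
  then have k: "-1/4 < y - of_int k" "y - of_int k < 1/4" by arith+
  have "tred y = tred ((y - of_int k) + of_int k)" by simp
  also have "\<dots> = y - of_int k" using k by (simp only: tred_add_of_int) (rule tred_eq_self; linarith)
  finally show "y \<in> tred -` {-1/4<..<1/4}" using k by simp
qed

lemma tred_far_multiple:
  assumes "r \<notin> \<int>"
  shows "\<exists>m::int. 1/4 \<le> \<bar>tred (of_int m * r)\<bar>"
proof -
  define f where "f = tred r"
  obtain z where r: "r = f + of_int z" unfolding f_def using tred_decomp by blast
  have "f \<noteq> 0" using assms r by auto
  show ?thesis
  proof (cases "\<bar>f\<bar> < 1/4")
    case False
    then show ?thesis by (intro exI[of _ 1]) (simp add: f_def)
  next
    case True
    \<comment> \<open>the first multiple of \<open>\<bar>f\<bar>\<close> reaching \<open>1/4\<close> overshoots by less than \<open>\<bar>f\<bar>\<close>\<close>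
    define k where "k = \<lceil>1 / (4 * \<bar>f\<bar>)\<rceil>"
    have "1 / (4 * \<bar>f\<bar>) \<le> of_int k" "of_int k < 1 / (4 * \<bar>f\<bar>) + 1"
      unfolding k_def using ceiling_correct[of "1 / (4 * \<bar>f\<bar>)"] by linarith+
    then have lower: "1/4 \<le> of_int k * \<bar>f\<bar>" and upper: "of_int k * \<bar>f\<bar> < 1/4 + \<bar>f\<bar>"
      using \<open>f \<noteq> 0\<close> by (simp_all add: field_simps)
    define m where "m = (if f > 0 then k else - k)"
    have "of_int m * r = of_int k * \<bar>f\<bar> + of_int (m * z)"
      using r by (simp add: m_def algebra_simps)
    then have "tred (of_int m * r) = tred (of_int k * \<bar>f\<bar>)"
      by (simp only: tred_add_of_int)
    also have "\<dots> = of_int k * \<bar>f\<bar>"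
      by (rule tred_eq_self) (use lower upper True in linarith)+
    finally show ?thesis using lower by (intro exI[of _ m]) simp
  qed
qed

lemma int_independent_cong:
  "(\<And>k. k \<in> S \<Longrightarrow> v k = w k) \<Longrightarrow> int_independent v S \<longleftrightarrow> int_independent w S"
  unfolding int_independent_def by (metis (no_types, lifting) sum.cong)

lemma int_independent_subset:
  assumes "int_independent v S" "S' \<subseteq> S" "finite S"
  shows "int_independent v S'"
  unfolding int_independent_def
proof (intro allI impI)
  fix c :: "_ \<Rightarrow> int"
  assume c: "(\<Sum>k\<in>S'. of_int (c k) * v k) = 0"
  define c' where "c' k = (if k \<in> S' then c k else 0)" for k
  have "(\<Sum>k\<in>S. of_int (c' k) * v k) = (\<Sum>k\<in>S'. of_int (c k) * v k)"
    using assms(2,3) by (intro sum.mono_neutral_cong_right) (auto simp: c'_def)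
  then have "\<forall>k\<in>S. c' k = 0" using assms(1) c unfolding int_independent_def by simp
  then show "\<forall>k\<in>S'. c k = 0" using assms(2) by (metis c'_def subsetD)
qed

lemma int_independent_nonzero:
  assumes "int_independent v S" "k \<in> S"
  shows "v k \<noteq> 0"
proof
  assume "v k = 0"
  define c where "c j = (if j = k then 1 else 0 :: int)" for j
  have "(\<Sum>j\<in>S. of_int (c j) * v j) = 0"
    using \<open>v k = 0\<close> by (intro sum.neutral) (simp add: c_def)
  then have "c k = 0" using assms unfolding int_independent_def by blast
  then show False by (simp add: c_def)
qed

lemma int_independent_eliminate:
  assumes indep: "int_independent v S" and "finite S" "j \<in> S" "a j \<noteq> 0"
  shows "int_independent (\<lambda>k. of_int (a j) * v k - of_int (a k) * v j) (S - {j})"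
  unfolding int_independent_def
proof (intro allI impI)
  fix c :: "_ \<Rightarrow> int"
  assume c: "(\<Sum>k\<in>S - {j}. of_int (c k) * (of_int (a j) * v k - of_int (a k) * v j)) = 0"
  define d where "d k = (if k = j then - (\<Sum>k\<in>S - {j}. c k * a k) else c k * a j)" for k
  have "(\<Sum>k\<in>S. of_int (d k) * v k) = of_int (d j) * v j + (\<Sum>k\<in>S - {j}. of_int (d k) * v k)"
    using \<open>finite S\<close> \<open>j \<in> S\<close> by (rule sum.remove)
  also have "\<dots> = - (\<Sum>k\<in>S - {j}. of_int (c k) * of_int (a k) * v j)
      + (\<Sum>k\<in>S - {j}. of_int (c k) * of_int (a j) * v k)"
    by (simp add: d_def sum_distrib_right)
  also have "\<dots> = (\<Sum>k\<in>S - {j}. of_int (c k) * (of_int (a j) * v k - of_int (a k) * v j))"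
    by (simp add: sum_subtractf[symmetric] right_diff_distrib mult.assoc mult.left_commute)
  finally have "\<forall>k\<in>S. d k = 0" using indep c unfolding int_independent_def by simp
  then show "\<forall>k\<in>S - {j}. c k = 0" using \<open>a j \<noteq> 0\<close> by (metis DiffE d_def insertI1 mult_eq_0_iff)
qed

lemma int_independent_not_all_Ints:
  assumes indep: "int_independent v S" and "finite S" "2 \<le> card S"
  shows "\<exists>k\<in>S. v k \<notin> \<int>"
proof (rule ccontr)
  assume "\<not> ?thesis"
  obtain p q where pq: "p \<in> S" "q \<in> S" "p \<noteq> q"
    using \<open>2 \<le> card S\<close> by (metis card_2_iff' obtain_subset_with_card_n subset_iff)
  with \<open>\<not> ?thesis\<close> obtain zp zq where zp: "v p = of_int zp" and zq: "v q = of_int zq"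
    by (metis Ints_cases)
  have "zq \<noteq> 0" using int_independent_nonzero[OF indep \<open>q \<in> S\<close>] zq by auto
  have indep_pq: "int_independent v {p, q}"
    using indep pq \<open>finite S\<close> by (auto intro: int_independent_subset)
  define c where "c k = (if k = p then zq else - zp)" for k
  \<comment> \<open>two integers are always dependent over \<open>\<int>\<close>\<close>
  have "(\<Sum>k\<in>{p, q}. of_int (c k) * v k) = 0"
    using pq zp zq by (simp add: c_def)
  then have "c p = 0" using indep_pq unfolding int_independent_def by blast
  then show False using \<open>zq \<noteq> 0\<close> by (simp add: c_def)
qed

interpretation rat_real: module "\<lambda>(q::rat) (x::real). of_rat q * x"
  by unfold_locales (simp_all add: algebra_simps of_rat_add of_rat_mult)

lemma int_independent_if_rat_independent:
  assumes "finite S" "inj_on v S" "\<not> rat_real.dependent (v ` S)"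
  shows "int_independent v S"
  unfolding int_independent_def
proof (intro allI impI)
  fix c :: "_ \<Rightarrow> int"
  assume c: "(\<Sum>k\<in>S. of_int (c k) * v k) = 0"
  define u :: "real \<Rightarrow> rat" where "u y = of_int (c (the_inv_into S v y))" for y
  have u: "u (v k) = of_int (c k)" if "k \<in> S" for k
    unfolding u_def using the_inv_into_f_f[OF assms(2) that] by simp
  have "(\<Sum>y\<in>v ` S. of_rat (u y) * y) = (\<Sum>k\<in>S. of_int (c k) * v k)"
    by (simp add: sum.reindex[OF assms(2)] u)
  then have "u (v k) = 0" if "k \<in> S" for k
    using rat_real.independentD[OF assms(3), of "v ` S" u] assms(1) c that by simp
  then show "\<forall>k\<in>S. c k = 0" using u by simp
qed

lemma fin_supp_int_independent_family:
  assumes "J \<subseteq> I" "infinite J" "inj_on t J" "\<not> rat_real.dependent (t ` J)"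
  shows "\<exists>G S. finite S \<and> card S = n \<and> G ` S \<subseteq> fin_supp I
    \<and> int_independent (\<lambda>k::nat. real_pairing (G k) t) S"
proof -
  obtain f :: "nat \<Rightarrow> _" where f: "inj f" "range f \<subseteq> J"
    using infinite_countable_subset[OF assms(2)] by blast
  define G where "G k = (\<lambda>i. if i = f k then 1 else 0 :: int)" for k
  have supp: "{i. G k i \<noteq> 0} = {f k}" for k by (auto simp: G_def)
  have "G k \<in> fin_supp I" for k
    using f assms(1) by (auto simp: fin_supp_def supp G_def)
  moreover have "real_pairing (G k) t = t (f k)" for k
    by (simp add: real_pairing_def supp G_def)
  moreover have "int_independent (t \<circ> f) {..<n}"
  proof (rule int_independent_if_rat_independent)
    show "inj_on (t \<circ> f) {..<n}"
      using f assms(3) by (auto intro!: comp_inj_on inj_on_subset[of t J] inj_on_subset[of f UNIV])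
    show "\<not> rat_real.dependent ((t \<circ> f) ` {..<n})"
      using f assms(4) by (metis image_comp image_mono rat_real.dependent_mono subset_UNIV subset_trans)
  qed simp
  ultimately show ?thesis
    by (intro exI[of _ G] exI[of _ "{..<n}"]) (auto cong: int_independent_cong)
qed

lemma annihilator_int_independent_step:
  fixes G :: "'k \<Rightarrow> 'i \<Rightarrow> int"
  assumes "finite S" "card S = Suc n" "G ` S \<subseteq> annihilator I X"
    and indep: "int_independent (\<lambda>k. real_pairing (G k) t) S"
  shows "\<exists>G' (S' :: 'k set). finite S' \<and> card S' = n \<and> G' ` S' \<subseteq> annihilator I (insert x X)
    \<and> int_independent (\<lambda>k. real_pairing (G' k) t) S'"
proof -
  define a where "a k = pairing (G k) x" for k
  show ?thesis
  proof (cases "\<forall>k\<in>S. a k = 0")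
    case True
    obtain j where "j \<in> S" using assms(2) by fastforce
    have "G ` (S - {j}) \<subseteq> annihilator I (insert x X)"
      using assms(3) True by (auto simp: annihilator_insert a_def)
    moreover have "int_independent (\<lambda>k. real_pairing (G k) t) (S - {j})"
      using int_independent_subset[OF indep _ assms(1), of "S - {j}"] by blast
    ultimately show ?thesis
      using assms(1,2) \<open>j \<in> S\<close> by (intro exI[of _ G] exI[of _ "S - {j}"]) auto
  next
    case False
    then obtain j where j: "j \<in> S" "a j \<noteq> 0" by blast
    \<comment> \<open>Gaussian elimination of the functional \<open>pairing _ x\<close> using the pivot \<open>G j\<close>\<close>
    define G' where "G' k = (\<lambda>i. a j * G k i - a k * G j i)" for k
    have G: "G k \<in> annihilator I X" "G k \<in> fin_supp I" if "k \<in> S" for k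
      using assms(3) that by (auto simp: annihilator_def)
    have G'_annihilated: "G' k \<in> annihilator I (insert x X)" if "k \<in> S" for k
      using that j G pairing_lincomb[OF G(2)[OF that] G(2)[OF j(1)]]
      by (simp add: annihilator_insert G'_def annihilator_lincomb a_def)
    have "real_pairing (G' k) t = of_int (a j) * real_pairing (G k) t - of_int (a k) * real_pairing (G j) t"
      if "k \<in> S" for k
      unfolding G'_def using real_pairing_lincomb[OF G(2)[OF that] G(2)[OF j(1)]] .
    then have "int_independent (\<lambda>k. real_pairing (G' k) t) (S - {j})"
      using int_independent_eliminate[of _ _ j a, OF indep \<open>finite S\<close> j]
      by (subst int_independent_cong) auto
    then show ?thesis
      using assms(1,2) j G'_annihilated by (intro exI[of _ G'] exI[of _ "S - {j}"]) auto
  qed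
qed

lemma annihilator_int_independent_family:
  assumes "finite X" "J \<subseteq> I" "infinite J" "inj_on t J" "\<not> rat_real.dependent (t ` J)"
  shows "\<exists>G S. finite S \<and> card S = n \<and> G ` S \<subseteq> annihilator I X
    \<and> int_independent (\<lambda>k::nat. real_pairing (G k) t) S"
  using \<open>finite X\<close>
proof (induction X arbitrary: n rule: finite_induct)
  case empty
  then show ?case using fin_supp_int_independent_family[OF assms(2-5)] by simp
next
  case (insert x X)
  from insert.IH[of "Suc n"] obtain G and S :: "nat set" where "finite S" "card S = Suc n"
    "G ` S \<subseteq> annihilator I X" "int_independent (\<lambda>k. real_pairing (G k) t) S"
    by blast
  then show ?case by (rule annihilator_int_independent_step)
qed

lemma annihilator_nonintegral_real_pairing:
  assumes "finite X" "J \<subseteq> I" "infinite J" "inj_on t J" "\<not> rat_real.dependent (t ` J)"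
  shows "\<exists>g\<in>annihilator I X. real_pairing g t \<notin> \<int>"
proof -
  obtain G S where "finite S" "card S = 2" "G ` S \<subseteq> annihilator I X"
    and "int_independent (\<lambda>k::nat. real_pairing (G k) t) S"
    using annihilator_int_independent_family[OF assms] by blast
  then show ?thesis using int_independent_not_all_Ints by fastforce
qed

lemma topspace_H_topology: "topspace (H_topology I) = fin_supp I"
proof -
  have "fin_supp I \<in> {{g \<in> fin_supp I. pairing g x = n} | x n. \<forall>i. i \<notin> I \<longrightarrow> x i = 0}"
    by (rule CollectI, rule exI[of _ "\<lambda>i. 0"], rule exI[of _ 0]) (simp add: pairing_def)
  then show ?thesis unfolding H_topology_def by auto
qed

lemma openin_H_topology_contains_basic_nbhd:
  assumes "openin (H_topology I) U" "g0 \<in> U"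
  shows "\<exists>X. finite X \<and> {g \<in> fin_supp I. \<forall>x\<in>X. pairing g x = pairing g0 x} \<subseteq> U"
proof -
  have "generate_topology_on {{g \<in> fin_supp I. pairing g x = n} | x n. \<forall>i. i \<notin> I \<longrightarrow> x i = 0} U"
    using assms(1) by (simp add: H_topology_def openin_topology_generated_by_iff)
  then show ?thesis using assms(2)
  proof (induction arbitrary: g0 rule: generate_topology_on.induct)
    case Empty
    then show ?case by simp
  next
    case (Int a b)
    obtain X1 where "finite X1" "{g \<in> fin_supp I. \<forall>x\<in>X1. pairing g x = pairing g0 x} \<subseteq> a"
      using Int by (meson IntD1)
    moreover obtain X2 where "finite X2" "{g \<in> fin_supp I. \<forall>x\<in>X2. pairing g x = pairing g0 x} \<subseteq> b"
      using Int by (meson IntD2)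
    ultimately show ?case by (intro exI[of _ "X1 \<union> X2"]) auto
  next
    case (UN K)
    then obtain k where "k \<in> K" "g0 \<in> k" by blast
    with UN obtain X where "finite X" "{g \<in> fin_supp I. \<forall>x\<in>X. pairing g x = pairing g0 x} \<subseteq> k"
      by blast
    then show ?case using \<open>k \<in> K\<close> by (intro exI[of _ X]) auto
  next
    case (Basis s)
    then obtain x where "s = {g \<in> fin_supp I. pairing g x = pairing g0 x}" by blast
    then show ?case by (intro exI[of _ "{x}"]) auto
  qed
qed

lemma openin_T_topology_quarter: "openin T_topology {-1/4<..<1/4}"
  unfolding T_topology_def
proof (rule topology_generated_by_Basis, safe)
  show "x \<in> Tset" if "x \<in> {-1/4<..<1/4}" for x using that by (simp add: Tset_def)
  show "open (tred -` {-1/4<..<1/4})" unfolding tred_preimage_quarter by (intro open_UN) auto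
qed

lemma continuous_char_of_small_on_annihilator:
  assumes "continuous_map (H_topology I) T_topology (char_of t)"
  shows "\<exists>X. finite X \<and> (\<forall>g\<in>annihilator I X. \<bar>char_of t g\<bar> < 1/4)"
proof -
  define U where "U = {g \<in> topspace (H_topology I). char_of t g \<in> {-1/4<..<1/4}}"
  have U_open: "openin (H_topology I) U"
    unfolding U_def using assms openin_T_topology_quarter by (rule openin_continuous_map_preimage)
  have "(\<lambda>i. 0) \<in> U"
    by (simp add: U_def topspace_H_topology fin_supp_def char_of_def)
  then obtain X where "finite X" "{g \<in> fin_supp I. \<forall>x\<in>X. pairing g x = pairing (\<lambda>i. 0) x} \<subseteq> U"
    using openin_H_topology_contains_basic_nbhd[OF U_open] by blast
  then have "finite X" "annihilator I X \<subseteq> U" by (simp_all add: annihilator_def)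
  then show ?thesis unfolding U_def by (intro exI[of _ X]) (fastforce simp: abs_if)
qed

theorem lemma4p13:
  fixes I J :: "'i set" and t :: "'i \<Rightarrow> real"
  assumes "\<not> measurable_cardinality I"
    and "\<forall>i\<in>I. t i \<in> Tset" and "\<forall>i. i \<notin> I \<longrightarrow> t i = 0"
    and "J \<subseteq> I" and "infinite J"
    and "\<forall>i\<in>J. t i \<notin> \<rat>"
    and "inj_on t J"
    and "\<not> module.dependent (\<lambda>(q::rat) (x::real). of_rat q * x) (t ` J)"
  shows "t \<notin> dual_group I"
proof
  assume "t \<in> dual_group I"
  then obtain X where "finite X" and small: "\<forall>g\<in>annihilator I X. \<bar>char_of t g\<bar> < 1/4"
    using continuous_char_of_small_on_annihilator by (force simp: dual_group_def)
  then obtain g where g: "g \<in> annihilator I X" "real_pairing g t \<notin> \<int>"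
    using annihilator_nonintegral_real_pairing assms(4,5,7,8) by blast
  then obtain m where m: "1/4 \<le> \<bar>tred (of_int m * real_pairing g t)\<bar>"
    using tred_far_multiple by blast
  have "g \<in> fin_supp I" using g(1) by (simp add: annihilator_def)
  then have "char_of t (\<lambda>i. m * g i) = tred (of_int m * real_pairing g t)"
    using real_pairing_lincomb[of g I g m 0 t] by (simp add: char_of_eq_tred_real_pairing)
  moreover have "(\<lambda>i. m * g i) \<in> annihilator I X"
    using annihilator_lincomb[OF g(1) g(1), of m 0] by simp
  ultimately show False using small m by fastforce
qed

end
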